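(* Let $J:[0,\infty)\to\mathbb R$ be a concave, nondecreasing function with $J(0)=0$, and let $k:(0,\infty)\to(0,\infty)$ be nondecreasing and satisfy $k(Cz)\le C\,k(z)$ for all $C\ge1$ and $z>0$. If $z>0$ satisfies $z^2\le A^2+B^2J\bigl(k(z)\bigr)$ for some $A,B>0$, then $$J(z)\le K\,J(A)\Bigl[1+J\bigl(k(A)\bigr)\Bigl(\frac BA\Bigr)^2\Bigr],$$ where $K$ is a universal constant. *)

theory Defs
  imports "HOL-Analysis.Analysis"
begin

end

theory Submission
  imports Defs
begin

text \<open>With \<open>t = z/A\<close>, the growth bounds on \<open>k\<close> and on the concave \<open>J\<close> give
  \<open>J (k z) \<le> t J (k A)\<close>, so the hypothesis becomes \<open>t\<^sup>2 \<le> 1 + t q\<close> with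
  \<open>q = J (k A) (B/A)\<^sup>2\<close>, forcing \<open>t \<le> 1 + q\<close>. Concavity again gives
  \<open>J z \<le> t J A\<close>, so the theorem holds with \<open>K = 1\<close>.\<close>

lemma concave_on_scale_le:
  fixes J :: "real \<Rightarrow> real"
  assumes "concave_on {0..} J" and "J 0 = 0" and "1 \<le> c" and "0 \<le> x"
  shows "J (c * x) \<le> c * J x"
proof -
  have "(1 - 1/c) * J 0 + (1/c) * J (c * x) \<le> J ((1 - 1/c) *\<^sub>R 0 + (1/c) *\<^sub>R (c * x))"
    using assms by (intro concave_onD) auto
  hence "J (c * x) / c \<le> J x"
    using assms by simp
  thus ?thesis
    using assms by (simp add: divide_le_eq mult.commute)
qed

lemma mono_on_nonneg:
  fixes J :: "real \<Rightarrow> real"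
  assumes "mono_on {0..} J" and "J 0 = 0" and "0 \<le> x"
  shows "0 \<le> J x"
  using assms by (metis atLeast_iff mono_onD order_refl)

lemma le_of_square_le_linear:
  fixes t q :: real
  assumes "1 \<le> t" and "t\<^sup>2 \<le> 1 + t * q"
  shows "t \<le> 1 + q"
proof -
  have "t * t \<le> t * (1 + q)"
    using assms by (simp add: power2_eq_square algebra_simps)
  thus ?thesis
    using assms(1) by simp
qed

lemma ratio_le_of_square_le:
  fixes J k :: "real \<Rightarrow> real"
  assumes J: "concave_on {0..} J" "mono_on {0..} J" "J 0 = 0"
    and k: "\<forall>x>0. k x > 0" "\<forall>C\<ge>1. \<forall>y>0. k (C * y) \<le> C * k y"
    and "0 < A" and "A \<le> z" and hyp: "z\<^sup>2 \<le> A\<^sup>2 + B\<^sup>2 * J (k z)"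
  shows "z / A \<le> 1 + J (k A) * (B / A)\<^sup>2"
proof -
  define t where "t = z / A"
  have t: "1 \<le> t" "z = t * A"
    using \<open>0 < A\<close> \<open>A \<le> z\<close> by (simp_all add: t_def)
  have "k z \<le> t * k A"
    using k(2) t \<open>0 < A\<close> by simp
  moreover have "0 < k z"
    using k(1) t \<open>0 < A\<close> by simp
  ultimately have "J (k z) \<le> J (t * k A)"
    by (intro mono_onD[OF J(2)]) auto
  also have "\<dots> \<le> t * J (k A)"
    using concave_on_scale_le[OF J(1,3) t(1)] k(1) \<open>0 < A\<close> by (simp add: less_imp_le)
  finally have "B\<^sup>2 * J (k z) \<le> B\<^sup>2 * (t * J (k A))"
    by (simp add: mult_left_mono)
  hence "A\<^sup>2 * t\<^sup>2 \<le> A\<^sup>2 + B\<^sup>2 * (t * J (k A))"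
    using hyp t by (simp add: power_mult_distrib mult.commute)
  hence "A\<^sup>2 * t\<^sup>2 \<le> A\<^sup>2 * (1 + t * (J (k A) * (B / A)\<^sup>2))"
    using \<open>0 < A\<close> by (simp add: power_divide algebra_simps)
  hence "t\<^sup>2 \<le> 1 + t * (J (k A) * (B / A)\<^sup>2)"
    using \<open>0 < A\<close> by simp
  thus ?thesis
    using le_of_square_le_linear t(1) by (simp add: t_def)
qed

theorem lemma3p3:
  shows "\<exists>K::real. K > 0 \<and>
    (\<forall>(J::real \<Rightarrow> real) (k::real \<Rightarrow> real) (A::real) (B::real) (z::real).
       concave_on {0..} J \<and> mono_on {0..} J \<and> J 0 = 0 \<and>
       (\<forall>x>0. k x > 0) \<and> mono_on {0<..} k \<and>
       (\<forall>C\<ge>1. \<forall>y>0. k (C * y) \<le> C * k y) \<and>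
       A > 0 \<and> B > 0 \<and> z > 0 \<and>
       z\<^sup>2 \<le> A\<^sup>2 + B\<^sup>2 * J (k z)
       \<longrightarrow> J z \<le> K * J A * (1 + J (k A) * (B / A)\<^sup>2))"
proof (intro exI[of _ 1] conjI allI impI)
  fix J k :: "real \<Rightarrow> real" and A B z :: real
  assume H: "concave_on {0..} J \<and> mono_on {0..} J \<and> J 0 = 0 \<and>
       (\<forall>x>0. k x > 0) \<and> mono_on {0<..} k \<and>
       (\<forall>C\<ge>1. \<forall>y>0. k (C * y) \<le> C * k y) \<and>
       A > 0 \<and> B > 0 \<and> z > 0 \<and>
       z\<^sup>2 \<le> A\<^sup>2 + B\<^sup>2 * J (k z)"
  define q where "q = J (k A) * (B / A)\<^sup>2"
  have JA: "0 \<le> J A" and q: "0 \<le> q"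
    using H mono_on_nonneg[of J A] mono_on_nonneg[of J "k A"] by (simp_all add: q_def less_imp_le)
  have "J z \<le> (1 + q) * J A"
  proof (cases "z \<le> A")
    case True
    then have "J z \<le> J A"
      using H by (intro mono_onD[of "{0..}" J]) auto
    also have "\<dots> \<le> (1 + q) * J A"
      using JA q by (simp add: mult_le_cancel_right1)
    finally show ?thesis .
  next
    case False
    have "J z \<le> z / A * J A"
      using concave_on_scale_le[of J "z / A" A] H False by simp
    also have "\<dots> \<le> (1 + q) * J A"
      using ratio_le_of_square_le[of J k A z B] H False JA
      by (intro mult_right_mono) (simp_all add: q_def)
    finally show ?thesis .
  qed
  then show "J z \<le> 1 * J A * (1 + J (k A) * (B / A)\<^sup>2)"
    by (simp add: q_def mult.commute)
qed simp

end
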